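(* Let $k$ be a positive integer, $a=3k+1$, $S=\{a,2a-3,2a-2\}$ and $H_{6,k}=\langle S\rangle$. Then $H_{6,k}$ is a $3$-permutation numerical semigroup.
   Context: $\mathbb{N}=\{0,1,2,\dots\}$. A numerical semigroup is a submonoid $G$ of $(\mathbb{N},+,0)$ with $\mathbb{N}\setminus G$ finite; $\langle S\rangle$ is the submonoid generated by $S$. Writing the elements of a numerical semigroup as $0=g_0<g_1<g_2<\cdots$, it is an $n$-permutation numerical semigroup if it is generated by $\{g_1,\dots,g_n\}$ and for every $k\in\mathbb{N}$ the tuple $(g_{kn+1}\bmod n,\dots,g_{kn+n}\bmod n)$ contains exactly one representative of each residue class mod $n$. *)

theory Defs
  imports Main "HOL-Library.Infinite_Set"
begin

inductive_set submonoid_gen :: "nat set \<Rightarrow> nat set" for S :: "nat set" where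
  zero: "0 \<in> submonoid_gen S"
| gen_add: "s \<in> S \<Longrightarrow> x \<in> submonoid_gen S \<Longrightarrow> s + x \<in> submonoid_gen S"

definition numerical_semigroup :: "nat set \<Rightarrow> bool" where
  "numerical_semigroup G \<longleftrightarrow>
     0 \<in> G \<and> (\<forall>x\<in>G. \<forall>y\<in>G. x + y \<in> G) \<and> finite (UNIV - G)"

text \<open>The i-th element g_i of G in increasing order (g_0 = 0 for a numerical semigroup).\<close>
definition sg_elem :: "nat set \<Rightarrow> nat \<Rightarrow> nat" where
  "sg_elem G i = enumerate G i"

definition perm_numerical_semigroup :: "nat \<Rightarrow> nat set \<Rightarrow> bool" where
  "perm_numerical_semigroup n G \<longleftrightarrow>
     numerical_semigroup G \<and>
     G = submonoid_gen {sg_elem G i | i. 1 \<le> i \<and> i \<le> n} \<and>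
     (\<forall>k::nat. bij_betw (\<lambda>i. sg_elem G (k * n + i) mod n) {1..n} {0..<n})"

end

theory Submission
  imports Defs
begin

text \<open>
  An element x a + y (2a - 3) + z (2a - 2) of H equals s a - d with s = x + 2y + 2z and
  d = 3y + 2z, and for fixed s the attainable deficits d are exactly 0 and 2, ..., 3 \<lfloor>s/2\<rfloor>.
  So H consists of the multiples s a together with the runs s a - 3 \<lfloor>s/2\<rfloor>, ..., s a - 2.
  For a = 3k + 1 these pieces are disjoint and increasing in s as long as s \<le> 2k, and every
  integer from 2ka on lies in H. Enumerating H, each block g(3j+1), g(3j+2), g(3j+3) is then
  either three consecutive integers, or a multiple s a followed by the first two elements of
  the run of level s + 1, whose residues mod 3 are s, s + 1, s + 2 because a \<equiv> 1. An induction
  over the block ends g(3j) keeps track of which case occurs.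
\<close>

definition next_elem :: "nat set \<Rightarrow> nat \<Rightarrow> nat" where
  "next_elem S x = (LEAST y. y \<in> S \<and> x < y)"

lemma next_elem_eqI:
  assumes "y \<in> S" "x < y" "\<And>z. x < z \<Longrightarrow> z < y \<Longrightarrow> z \<notin> S"
  shows "next_elem S x = y"
  unfolding next_elem_def using assms
  by (intro Least_equality) (auto simp: not_le[symmetric])

lemma next_elem_Suc: "Suc x \<in> S \<Longrightarrow> next_elem S x = Suc x"
  by (rule next_elem_eqI) auto

lemma enumerate_Suc_next_elem:
  "infinite S \<Longrightarrow> enumerate S (Suc n) = next_elem S (enumerate S n)"
  by (simp add: enumerate_Suc'' next_elem_def)

lemma enumerate_add_funpow:
  "infinite S \<Longrightarrow> enumerate S (m + i) = (next_elem S ^^ i) (enumerate S m)"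
  by (induction i) (simp_all add: enumerate_Suc_next_elem)

lemma enumerate_mult_invariant:
  assumes "infinite S" "P (enumerate S 0)"
    and "\<And>x. x \<in> S \<Longrightarrow> P x \<Longrightarrow> P ((next_elem S ^^ n) x)"
  shows "P (enumerate S (j * n))"
proof (induction j)
  case (Suc j)
  have "enumerate S (Suc j * n) = (next_elem S ^^ n) (enumerate S (j * n))"
    using enumerate_add_funpow[OF assms(1), of "j * n" n] by (simp add: add.commute)
  then show ?case using assms(3) Suc enumerate_in_set[OF assms(1)] by simp
qed (use assms in simp)

lemma next_elem_funpow_consecutive:
  assumes "\<And>j. 1 \<le> j \<Longrightarrow> j \<le> i \<Longrightarrow> x + j \<in> S"
  shows "(next_elem S ^^ i) x = x + i"
  using assms
proof (induction i)
  case (Suc i)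
  have "(next_elem S ^^ i) x = x + i" using Suc by simp
  moreover have "Suc (x + i) \<in> S" using Suc.prems[of "Suc i"] by simp
  ultimately show ?case by (simp add: next_elem_Suc)
qed simp

lemma eq_if_mod_eq_nat:
  fixes m n q :: nat
  assumes "m mod q = n mod q" "n \<le> m" "m < n + q"
  shows "m = n"
proof -
  have "q dvd m - n" "m - n < q" using assms mod_eq_dvd_iff_nat by auto
  then have "m - n = 0" by (meson dvd_imp_le not_less neq0_conv)
  then show ?thesis using assms(2) by simp
qed

lemma distinct_consecutive_mod_3: "distinct [m mod 3, Suc m mod 3, Suc (Suc m) mod 3]"
  by (simp add: mod_Suc)

lemma setcompr_one_to_three: "{f i | i. 1 \<le> i \<and> i \<le> (3::nat)} = {f 1, f 2, f 3}"
proof -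
  have "i = 1 \<or> i = 2 \<or> i = 3" if "1 \<le> i" "i \<le> (3::nat)" for i using that by linarith
  then show ?thesis by auto
qed

lemma submonoid_gen_add:
  "x \<in> submonoid_gen S \<Longrightarrow> y \<in> submonoid_gen S \<Longrightarrow> x + y \<in> submonoid_gen S"
  by (induction x rule: submonoid_gen.induct) (auto simp: add.assoc intro: submonoid_gen.gen_add)

lemma submonoid_gen_mono:
  assumes "S \<subseteq> T"
  shows "submonoid_gen S \<subseteq> submonoid_gen T"
proof
  fix x assume "x \<in> submonoid_gen S"
  then show "x \<in> submonoid_gen T"
    by (induction x rule: submonoid_gen.induct) (use assms in \<open>auto intro: submonoid_gen.intros\<close>)
qed

lemma submonoid_gen_empty: "submonoid_gen {} = {0}"
proof -
  have "x = 0" if "x \<in> submonoid_gen {}" for x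
    using that by (induction x rule: submonoid_gen.induct) auto
  then show ?thesis by (auto intro: submonoid_gen.zero)
qed

lemma submonoid_gen_insert:
  "submonoid_gen (insert g S) = {m * g + x | m x. x \<in> submonoid_gen S}"
proof (intro equalityI subsetI)
  fix n assume "n \<in> submonoid_gen (insert g S)"
  then show "n \<in> {m * g + x | m x. x \<in> submonoid_gen S}"
  proof (induction n rule: submonoid_gen.induct)
    case zero
    then show ?case using submonoid_gen.zero by force
  next
    case (gen_add s x)
    then obtain m y where y: "x = m * g + y" "y \<in> submonoid_gen S" by blast
    show ?case
    proof (cases "s = g")
      case True
      then have "s + x = Suc m * g + y" using y by simp
      then show ?thesis using y by blast
    next
      case False
      then have "s + y \<in> submonoid_gen S" using gen_add.hyps y by (auto intro: submonoid_gen.gen_add)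
      moreover have "s + x = m * g + (s + y)" using y by simp
      ultimately show ?thesis by blast
    qed
  qed
next
  fix n assume "n \<in> {m * g + x | m x. x \<in> submonoid_gen S}"
  then obtain m x where n: "n = m * g + x" and x: "x \<in> submonoid_gen S" by blast
  have "x \<in> submonoid_gen (insert g S)" using x submonoid_gen_mono[of S "insert g S"] by blast
  then have "m * g + x \<in> submonoid_gen (insert g S)"
    by (induction m) (auto simp: add.assoc intro: submonoid_gen.gen_add)
  then show "n \<in> submonoid_gen (insert g S)" using n by simp
qed

lemma mem_submonoid_gen3_iff:
  "n \<in> submonoid_gen {p, q, r} \<longleftrightarrow> (\<exists>x y z. n = x * p + y * q + z * r)"
  by (simp add: submonoid_gen_insert submonoid_gen_empty add.assoc) blast

lemma numerical_semigroup_submonoid_gen: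
  "finite (UNIV - submonoid_gen S) \<Longrightarrow> numerical_semigroup (submonoid_gen S)"
  unfolding numerical_semigroup_def by (auto intro: submonoid_gen.zero submonoid_gen_add)

lemma bij_betw_mod_3:
  fixes f :: "nat \<Rightarrow> nat"
  assumes "distinct [f 1 mod 3, f 2 mod 3, f 3 mod 3]"
  shows "bij_betw (\<lambda>i. f i mod 3) {1..3} {0..<3}"
proof -
  have I: "{1..3::nat} = {1, 2, 3}" by auto
  have inj: "inj_on (\<lambda>i. f i mod 3) {1..3}" unfolding I inj_on_def using assms by auto
  then have "card ((\<lambda>i. f i mod 3) ` {1..3}) = card {0..<3::nat}" by (simp add: card_image)
  then have "(\<lambda>i. f i mod 3) ` {1..3} = {0..<3}" by (intro card_subset_eq) auto
  then show ?thesis using inj unfolding bij_betw_def by blast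
qed

abbreviation H6 :: "nat \<Rightarrow> nat set" where
  "H6 a \<equiv> submonoid_gen {a, 2 * a - 3, 2 * a - 2}"

lemma deficit_decomposition:
  fixes d q :: nat
  assumes "d \<noteq> 1" "d \<le> 3 * q"
  shows "\<exists>y z. d = 3 * y + 2 * z \<and> y + z \<le> q"
proof -
  consider "d mod 3 = 0" | "d mod 3 = 2" | "d mod 3 = 1" by linarith
  then show ?thesis
  proof cases
    case 1
    then have "d = 3 * (d div 3) + 2 * 0 \<and> d div 3 + 0 \<le> q" using assms by presburger
    then show ?thesis by blast
  next
    case 2
    then have "d = 3 * (d div 3) + 2 * 1 \<and> d div 3 + 1 \<le> q" using assms by presburger
    then show ?thesis by blast
  next
    case 3
    then have "d = 3 * (d div 3 - 1) + 2 * 2 \<and> d div 3 - 1 + 2 \<le> q" using assms by presburger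
    then show ?thesis by blast
  qed
qed

lemma mem_H6_iff:
  assumes "2 \<le> a"
  shows "n \<in> H6 a \<longleftrightarrow> (\<exists>s d. n + d = s * a \<and> d \<noteq> 1 \<and> d \<le> 3 * (s div 2))"
proof -
  obtain c where c: "a = c + 2" using assms le_Suc_ex by (metis add.commute)
  have gens: "2 * a - 3 = 2 * c + 1" "2 * a - 2 = 2 * c + 2" using c by simp_all
  show ?thesis
  proof
    assume "n \<in> H6 a"
    then obtain x y z where n: "n = x * a + y * (2 * c + 1) + z * (2 * c + 2)"
      unfolding mem_submonoid_gen3_iff gens by blast
    have "n + (3 * y + 2 * z) = (x + 2 * y + 2 * z) * a"
      using n c by (simp add: algebra_simps)
    moreover have "3 * y + 2 * z \<noteq> 1" by presburger
    moreover have "3 * y + 2 * z \<le> 3 * ((x + 2 * y + 2 * z) div 2)"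
    proof -
      have "(x + 2 * (y + z)) div 2 = x div 2 + (y + z)" by simp
      then show ?thesis by (simp add: algebra_simps)
    qed
    ultimately show "\<exists>s d. n + d = s * a \<and> d \<noteq> 1 \<and> d \<le> 3 * (s div 2)" by blast
  next
    assume "\<exists>s d. n + d = s * a \<and> d \<noteq> 1 \<and> d \<le> 3 * (s div 2)"
    then obtain s d where sd: "n + d = s * a" "d \<noteq> 1" "d \<le> 3 * (s div 2)" by blast
    obtain y z where yz: "d = 3 * y + 2 * z" "y + z \<le> s div 2"
      using sd(2,3) deficit_decomposition by blast
    define x where "x = s - (2 * y + 2 * z)"
    have x: "s = x + 2 * y + 2 * z" using yz(2) unfolding x_def by linarith
    have "n + (3 * y + 2 * z) = (x + 2 * y + 2 * z) * (c + 2)"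
      using sd(1) unfolding yz(1) x c .
    then have "n = x * a + y * (2 * c + 1) + z * (2 * c + 2)"
      unfolding c by (simp add: algebra_simps)
    then show "n \<in> H6 a" unfolding mem_submonoid_gen3_iff gens by blast
  qed
qed

definition run_start :: "nat \<Rightarrow> nat \<Rightarrow> nat" where
  "run_start a s = s * a - 3 * (s div 2)"

lemma run_start_add:
  assumes "2 \<le> a"
  shows "run_start a s + 3 * (s div 2) = s * a"
proof -
  have "3 * (s div 2) \<le> s * 2" by linarith
  also have "\<dots> \<le> s * a" using assms by simp
  finally show ?thesis unfolding run_start_def by simp
qed

lemma run_start_mono:
  assumes "3 \<le> a" "s \<le> t"
  shows "run_start a s \<le> run_start a t"
proof (rule lift_Suc_mono_le[of "run_start a", OF _ assms(2)])
  fix n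
  have "run_start a n + 3 * (n div 2) + 3 \<le> run_start a (Suc n) + 3 * (Suc n div 2)"
    using assms(1) by (simp add: run_start_add)
  then show "run_start a n \<le> run_start a (Suc n)" by linarith
qed

lemma mult_mem_H6:
  assumes "2 \<le> a"
  shows "s * a \<in> H6 a"
proof -
  have "s * a + 0 = s * a \<and> (0::nat) \<noteq> 1 \<and> 0 \<le> 3 * (s div 2)" by simp
  then show ?thesis unfolding mem_H6_iff[OF assms] by blast
qed

lemma run_start_mem_H6:
  assumes "2 \<le> a"
  shows "run_start a s \<in> H6 a"
proof -
  have "3 * (s div 2) \<noteq> 1" by presburger
  then show ?thesis using run_start_add[OF assms, of s] unfolding mem_H6_iff[OF assms] by blast
qed

lemma mem_H6_run:
  assumes "2 \<le> a" "run_start a s \<le> n" "n + 2 \<le> s * a"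
  shows "n \<in> H6 a"
proof -
  have "n + (s * a - n) = s * a" "s * a - n \<noteq> 1" "s * a - n \<le> 3 * (s div 2)"
    using assms run_start_add[OF assms(1), of s] by linarith+
  then show ?thesis unfolding mem_H6_iff[OF assms(1)] by blast
qed

lemma mem_H6_level:
  assumes "2 \<le> a" "n \<in> H6 a"
  obtains s where "run_start a s \<le> n" "n \<le> s * a" "n + 1 \<noteq> s * a"
proof -
  obtain s d where sd: "n + d = s * a" "d \<noteq> 1" "d \<le> 3 * (s div 2)"
    using assms unfolding mem_H6_iff[OF assms(1)] by blast
  show ?thesis
  proof (rule that[of s])
    show "run_start a s \<le> n" "n \<le> s * a"
      using sd run_start_add[OF assms(1), of s] by linarith+
    show "n + 1 \<noteq> s * a" using sd by auto
  qed
qed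

lemma not_mem_H6_after_mult:
  assumes "3 \<le> a" "s * a < n" "n < run_start a (Suc s)"
  shows "n \<notin> H6 a"
proof
  assume "n \<in> H6 a"
  then obtain t where t: "run_start a t \<le> n" "n \<le> t * a"
    using assms(1) mem_H6_level[of a n] by auto
  show False
  proof (cases "t \<le> s")
    case True
    then show False using t(2) assms(2) mult_le_mono1[of t s a] by linarith
  next
    case False
    then show False using t(1) assms(3) run_start_mono[OF assms(1), of "Suc s" t] by linarith
  qed
qed

lemma not_mem_H6_before_mult:
  assumes "3 \<le> a" "3 * (Suc s div 2) \<le> a" "n + 1 = s * a"
  shows "n \<notin> H6 a"
proof
  assume "n \<in> H6 a"
  then obtain t where t: "run_start a t \<le> n" "n \<le> t * a" "n + 1 \<noteq> t * a"
    using assms(1) mem_H6_level[of a n] by auto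
  consider "Suc t \<le> s" | "t = s" | "Suc s \<le> t" by linarith
  then show False
  proof cases
    case 1
    then show False using t(2) assms(1,3) mult_le_mono1[of "Suc t" s a] by simp
  next
    case 2
    then show False using t(3) assms(3) by simp
  next
    case 3
    have "run_start a (Suc s) + 3 * (Suc s div 2) = s * a + a"
      using run_start_add[of a "Suc s"] assms(1) by simp
    then show False using t(1) assms run_start_mono[OF assms(1) 3] by linarith
  qed
qed

lemma Suc_run_start_mem_H6:
  assumes "2 \<le> a" "2 \<le> s"
  shows "Suc (run_start a s) \<in> H6 a"
proof (rule mem_H6_run[OF assms(1), of s])
  have "1 \<le> s div 2" using assms(2) by simp
  then show "Suc (run_start a s) + 2 \<le> s * a"
    using run_start_add[OF assms(1), of s] by linarith
qed simp

text \<open>The values that g(3j) can take, for a = 3k + 1.\<close>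

definition block_ends :: "nat \<Rightarrow> nat \<Rightarrow> nat set" where
  "block_ends k a =
     {0} \<union>
     {x. \<exists>s. 2 \<le> s \<and> s \<le> 2 * k \<and> run_start a s \<le> x \<and> x + 2 \<le> s * a \<and> (x + 2) mod 3 = s mod 3} \<union>
     {x. 2 * k * a \<le> x \<and> x mod 3 = (2 * k + 2) mod 3}"

context
  fixes k a :: nat
  assumes k_pos: "1 \<le> k" and a_eq: "a = 3 * k + 1"
begin

lemma a_ge_3: "3 \<le> a"
  using k_pos a_eq by simp

lemma a_ge_2: "2 \<le> a"
  using a_ge_3 by simp

lemma mult_add_mod_3: "(s * a + m) mod 3 = (s + m) mod 3"
proof -
  have "(s * a + m) mod 3 = (s + m + 3 * (s * k)) mod 3" using a_eq by (simp add: algebra_simps)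
  also have "\<dots> = (s + m) mod 3" by simp
  finally show ?thesis .
qed

lemma mult_mod_3: "s * a mod 3 = s mod 3"
  using mult_add_mod_3[of s 0] by simp

lemma run_start_mod_3: "run_start a s mod 3 = s mod 3"
proof -
  have "run_start a s mod 3 = (run_start a s + 3 * (s div 2)) mod 3" by simp
  also have "\<dots> = s mod 3" using run_start_add[of a s] a_ge_2 mult_mod_3[of s] by simp
  finally show ?thesis .
qed

lemma H6_conductor:
  assumes "2 * k * a \<le> n"
  shows "n \<in> H6 a"
proof -
  define q where "q = n div a"
  have n: "n = q * a + n mod a" unfolding q_def by simp
  have q: "2 * k \<le> q" using div_le_mono[OF assms, of a] a_ge_2 unfolding q_def by simp
  have r: "n mod a < a" using a_ge_2 by simp
  consider "n mod a = 0" | "n mod a = a - 1" | "1 \<le> n mod a" "n mod a \<le> a - 2" using r by linarith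
  then show ?thesis
  proof cases
    case 1
    then show ?thesis using n mult_mem_H6[of a q] a_ge_2 by simp
  next
    case 2
    have "k + 1 \<le> (q + 2) div 2" using q by linarith
    moreover have "(q + 2) * a = q * a + 2 * a" by (simp add: algebra_simps)
    ultimately have "run_start a (q + 2) \<le> n" "n + 2 \<le> (q + 2) * a"
      using run_start_add[OF a_ge_2, of "q + 2"] n 2 a_eq by linarith+
    then show ?thesis using mem_H6_run[OF a_ge_2] by blast
  next
    case 3
    have "k \<le> (q + 1) div 2" using q by linarith
    moreover have "(q + 1) * a = q * a + a" by simp
    ultimately have "run_start a (q + 1) \<le> n" "n + 2 \<le> (q + 1) * a"
      using run_start_add[OF a_ge_2, of "q + 1"] n 3 a_eq by linarith+
    then show ?thesis using mem_H6_run[OF a_ge_2] by blast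
  qed
qed

lemma three_half_Suc_lt_a:
  assumes "s \<le> 2 * k"
  shows "3 * (Suc s div 2) < a"
  using assms a_eq by presburger

lemma next_elem_H6_mult:
  assumes "s \<le> 2 * k"
  shows "next_elem (H6 a) (s * a) = run_start a (Suc s)"
proof (rule next_elem_eqI)
  show "run_start a (Suc s) \<in> H6 a" by (rule run_start_mem_H6[OF a_ge_2])
  show "s * a < run_start a (Suc s)"
    using run_start_add[OF a_ge_2, of "Suc s"] three_half_Suc_lt_a[OF assms] by simp
  show "\<And>z. s * a < z \<Longrightarrow> z < run_start a (Suc s) \<Longrightarrow> z \<notin> H6 a"
    by (rule not_mem_H6_after_mult[OF a_ge_3])
qed

lemma next_elem_H6_before_mult:
  assumes "1 \<le> s" "s \<le> 2 * k"
  shows "next_elem (H6 a) (s * a - 2) = s * a"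
proof (rule next_elem_eqI)
  have "a \<le> s * a" using assms(1) by simp
  then show "s * a - 2 < s * a" using a_ge_3 by linarith
  fix z assume "s * a - 2 < z" "z < s * a"
  then have "z + 1 = s * a" by linarith
  then show "z \<notin> H6 a"
    by (rule not_mem_H6_before_mult[OF a_ge_3 less_imp_le[OF three_half_Suc_lt_a[OF assms(2)]]])
qed (rule mult_mem_H6[OF a_ge_2])

lemma next_elem_H6_run_start:
  assumes "1 \<le> s"
  shows "next_elem (H6 a) (run_start a (Suc s)) = Suc (run_start a (Suc s))"
  using Suc_run_start_mem_H6[OF a_ge_2, of "Suc s"] assms by (simp add: next_elem_Suc)

lemma block_after_mult:
  assumes "1 \<le> s" "s \<le> 2 * k"
  shows "distinct [s * a mod 3, run_start a (Suc s) mod 3, Suc (run_start a (Suc s)) mod 3]"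
    and "Suc (run_start a (Suc s)) \<in> block_ends k a"
proof -
  have r: "run_start a (Suc s) mod 3 = Suc s mod 3" by (rule run_start_mod_3)
  then have "Suc (run_start a (Suc s)) mod 3 = Suc (Suc s) mod 3" by (simp add: mod_Suc)
  then show "distinct [s * a mod 3, run_start a (Suc s) mod 3, Suc (run_start a (Suc s)) mod 3]"
    using r distinct_consecutive_mod_3[of s] by (simp add: mult_mod_3)
  show "Suc (run_start a (Suc s)) \<in> block_ends k a"
  proof (cases "s < 2 * k")
    case True
    have "1 \<le> Suc s div 2" using assms(1) by simp
    then have "Suc (run_start a (Suc s)) + 2 \<le> Suc s * a"
      using run_start_add[OF a_ge_2, of "Suc s"] by linarith
    moreover have "run_start a (Suc s) \<le> Suc (run_start a (Suc s))" by simp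
    ultimately show ?thesis unfolding block_ends_def
      using True assms(1) r
      by (intro UnI1 UnI2 CollectI exI[of _ "Suc s"]) simp
  next
    case False
    then have "s = 2 * k" using assms(2) by simp
    then have "Suc (run_start a (Suc s)) = 2 * k * a + 2"
      using run_start_add[OF a_ge_2, of "Suc s"] a_eq by (simp add: algebra_simps)
    moreover have "(2 * k * a + 2) mod 3 = (2 * k + 2) mod 3" by (rule mult_add_mod_3)
    ultimately show ?thesis unfolding block_ends_def by simp
  qed
qed

lemma block_ends_step:
  assumes "x \<in> block_ends k a"
  shows "distinct [(next_elem (H6 a) ^^ 1) x mod 3, (next_elem (H6 a) ^^ 2) x mod 3,
                   (next_elem (H6 a) ^^ 3) x mod 3] \<and>
         (next_elem (H6 a) ^^ 3) x \<in> block_ends k a" (is "?step x")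
proof -
  let ?N = "next_elem (H6 a)"
  have after_mult: "?step x" if "?N x = s * a" "1 \<le> s" "s \<le> 2 * k" for s
  proof -
    have "(?N ^^ 1) x = s * a" "(?N ^^ 2) x = run_start a (Suc s)"
      "(?N ^^ 3) x = Suc (run_start a (Suc s))"
      using that(1) next_elem_H6_mult[OF that(3)] next_elem_H6_run_start[OF that(2)]
      by (simp_all add: numeral_3_eq_3 numeral_2_eq_2)
    then show ?thesis using block_after_mult[OF that(2,3)] by simp
  qed
  have consecutive: "?step x"
    if "\<And>j. 1 \<le> j \<Longrightarrow> j \<le> 3 \<Longrightarrow> x + j \<in> H6 a" "x + 3 \<in> block_ends k a"
  proof -
    have "(?N ^^ i) x = x + i" if "i \<le> 3" for i
      using \<open>\<And>j. 1 \<le> j \<Longrightarrow> j \<le> 3 \<Longrightarrow> x + j \<in> H6 a\<close> that by (intro next_elem_funpow_consecutive) simp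
    then have "(?N ^^ 1) x = x + 1" "(?N ^^ 2) x = x + 2" "(?N ^^ 3) x = x + 3"
      by (simp del: funpow.simps)+
    then show ?thesis using that(2) distinct_consecutive_mod_3[of "x + 1"] by simp
  qed
  consider "x = 0"
    | s where "2 \<le> s" "s \<le> 2 * k" "run_start a s \<le> x" "x + 2 \<le> s * a" "(x + 2) mod 3 = s mod 3"
    | "2 * k * a \<le> x" "x mod 3 = (2 * k + 2) mod 3"
    using assms unfolding block_ends_def by blast
  then show ?thesis
  proof cases
    case 1
    have "run_start a 1 = 1 * a" by (simp add: run_start_def)
    then show ?thesis using after_mult[of 1] next_elem_H6_mult[of 0] 1 k_pos by simp
  next
    case (2 s)
    show ?thesis
    proof (cases "x + 5 \<le> s * a")
      case True
      have "(x + 3 + 2) mod 3 = (x + 2) mod 3" by presburger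
      then have "x + 3 \<in> block_ends k a"
        using 2 True unfolding block_ends_def by (intro UnI1 UnI2 CollectI exI[of _ s]) simp
      then show ?thesis using 2 True by (intro consecutive mem_H6_run[OF a_ge_2, of s]) auto
    next
      case False
      have "s * a mod 3 = (x + 2) mod 3" by (simp only: mult_mod_3 2(5))
      moreover have "s * a < x + 2 + 3" using False by simp
      ultimately have "s * a = x + 2" using eq_if_mod_eq_nat 2(4) by blast
      then have "x = s * a - 2" by simp
      then show ?thesis using after_mult[of s] next_elem_H6_before_mult 2 by simp
    qed
  next
    case 3
    have "x + 3 \<in> block_ends k a" using 3 unfolding block_ends_def by simp
    then show ?thesis using 3 by (intro consecutive H6_conductor) auto
  qed
qed

lemma infinite_H6: "infinite (H6 a)"
proof -
  have "{2 * k * a..} \<subseteq> H6 a" using H6_conductor by auto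
  then show ?thesis using infinite_Ici finite_subset by blast
qed

lemma numerical_semigroup_H6: "numerical_semigroup (H6 a)"
proof (rule numerical_semigroup_submonoid_gen)
  have "UNIV - H6 a \<subseteq> {..<2 * k * a}" using H6_conductor by (auto simp: not_less[symmetric])
  then show "finite (UNIV - H6 a)" using finite_subset by blast
qed

lemma enumerate_H6_0: "enumerate (H6 a) 0 = 0"
  by (simp add: enumerate_0 submonoid_gen.zero)

lemma enumerate_H6_generators:
  "enumerate (H6 a) 1 = a" "enumerate (H6 a) 2 = 2 * a - 3" "enumerate (H6 a) 3 = 2 * a - 2"
proof -
  have "run_start a 1 = a" "run_start a (Suc 1) = 2 * a - 3" "Suc (2 * a - 3) = 2 * a - 2"
    using a_ge_3 by (simp_all add: run_start_def)
  then have N: "next_elem (H6 a) 0 = a" "next_elem (H6 a) a = 2 * a - 3"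
    "next_elem (H6 a) (2 * a - 3) = 2 * a - 2"
    using next_elem_H6_mult[of 0] next_elem_H6_mult[of 1] next_elem_H6_run_start[of 1] k_pos
    by simp_all
  show e1: "enumerate (H6 a) 1 = a"
    using enumerate_Suc_next_elem[OF infinite_H6, of 0] enumerate_H6_0 N(1) by simp
  show e2: "enumerate (H6 a) 2 = 2 * a - 3"
    using enumerate_Suc_next_elem[OF infinite_H6, of 1] e1 N(2) by (simp only: Suc_1)
  have "Suc 2 = (3::nat)" by simp
  then show "enumerate (H6 a) 3 = 2 * a - 2"
    using enumerate_Suc_next_elem[OF infinite_H6, of 2] e2 N(3) by metis
qed

lemma enumerate_H6_residues:
  "distinct [enumerate (H6 a) (j * 3 + 1) mod 3, enumerate (H6 a) (j * 3 + 2) mod 3,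
             enumerate (H6 a) (j * 3 + 3) mod 3]"
proof -
  have "enumerate (H6 a) (j * 3) \<in> block_ends k a"
  proof (rule enumerate_mult_invariant[OF infinite_H6])
    show "enumerate (H6 a) 0 \<in> block_ends k a"
      by (simp add: enumerate_H6_0 block_ends_def)
  qed (use block_ends_step in blast)
  then show ?thesis
    using block_ends_step by (simp only: enumerate_add_funpow[OF infinite_H6])
qed

end

theorem lemma4p6:
  fixes k :: nat
  assumes "k \<ge> 1"
  defines "a \<equiv> 3 * k + 1"
  shows "perm_numerical_semigroup 3 (submonoid_gen {a, 2 * a - 3, 2 * a - 2})"
proof -
  have k: "1 \<le> k" "a = 3 * k + 1" using assms unfolding a_def by simp_all
  have gens: "{sg_elem (H6 a) i | i. 1 \<le> i \<and> i \<le> 3} = {a, 2 * a - 3, 2 * a - 2}"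
    using enumerate_H6_generators[OF k] unfolding sg_elem_def setcompr_one_to_three by simp
  show ?thesis
    unfolding perm_numerical_semigroup_def
  proof (intro conjI allI)
    show "numerical_semigroup (H6 a)" by (rule numerical_semigroup_H6[OF k])
    show "H6 a = submonoid_gen {sg_elem (H6 a) i | i. 1 \<le> i \<and> i \<le> 3}" unfolding gens ..
    fix j
    show "bij_betw (\<lambda>i. sg_elem (H6 a) (j * 3 + i) mod 3) {1..3} {0..<3}"
      unfolding sg_elem_def by (rule bij_betw_mod_3) (rule enumerate_H6_residues[OF k])
  qed
qed

end
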